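(* For every elementary cellular automaton rule $\alpha\in\{0,\dots,255\}$, every $n\ge1$, every $\Delta,\Delta'\in\mathcal{P}_n$ and every $i\in\mathbb{Z}_n$: if $d^{\leftarrow}_\Delta(i)=d^{\leftarrow}_{\Delta'}(i)$ and $d^{\rightarrow}_\Delta(i)=d^{\rightarrow}_{\Delta'}(i)$, then $f^{(\Delta)}_{\alpha,n}(x)_i=f^{(\Delta')}_{\alpha,n}(x)_i$ for every $x\in\{0,1\}^n$.
   Context: Cells are indexed by $\mathbb{Z}_n=\{0,\dots,n-1\}$, indices modulo $n$. For a Wolfram number $\alpha$, $r_\alpha(x_1,x_2,x_3)$ is the bit of $\alpha$ of weight $2^{4x_1+2x_2+x_3}$, and $f_{\alpha,n}(x)_i=r_\alpha(x_{i-1},x_i,x_{i+1})$. An update schedule is an ordered partition $\Delta=(\Delta_1,\dots,\Delta_k)$ of $\mathbb{Z}_n$ into nonempty blocks; $\mathcal{P}_n$ is the set of them. For a block $B$ let $f^{(B)}(x)_i=f_{\alpha,n}(x)_i$ if $i\in B$ and $x_i$ otherwise; $f^{(\Delta)}_{\alpha,n}=f^{(\Delta_k)}\circ\cdots\circ f^{(\Delta_1)}$. For $u,v\in\mathbb{Z}_n$ with $u\in\Delta_a$, $v\in\Delta_b$, the label is $lab_\Delta((u,v))=\oplus$ if $b\le a$ and $lab_\Delta((u,v))=\ominus$ if $a<b$. Define $d^{\leftarrow}_\Delta(i)=\max\{k\in\mathbb{N}:\forall j\in\mathbb{N},\,0<j<k\Rightarrow lab_\Delta((i-j,i-j+1))=\ominus\}$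 and $d^{\rightarrow}_\Delta(i)=\max\{k\in\mathbb{N}:\forall j\in\mathbb{N},\,0<j<k\Rightarrow lab_\Delta((i+j,i+j-1))=\ominus\}$ (these maxima are finite). *)

theory Defs
  imports Main
begin

text \<open>Cells are the naturals 0..<n; index arithmetic is modulo n.
  Configurations are functions nat => bool (only cells 0..<n are relevant).\<close>

definition cmod :: "nat \<Rightarrow> int \<Rightarrow> nat" where
  "cmod n k = nat (k mod int n)"

definition rule :: "nat \<Rightarrow> bool \<Rightarrow> bool \<Rightarrow> bool \<Rightarrow> bool" where
  "rule \<alpha> x1 x2 x3 = bit \<alpha> (4 * of_bool x1 + 2 * of_bool x2 + of_bool x3)"

definition eca :: "nat \<Rightarrow> nat \<Rightarrow> (nat \<Rightarrow> bool) \<Rightarrow> (nat \<Rightarrow> bool)" where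
  "eca \<alpha> n x i = rule \<alpha> (x (cmod n (int i - 1))) (x i) (x (cmod n (int i + 1)))"

definition update_schedule :: "nat \<Rightarrow> nat set list \<Rightarrow> bool" where
  "update_schedule n \<Delta> \<longleftrightarrow>
     (\<forall>a < length \<Delta>. \<Delta> ! a \<noteq> {}) \<and>
     (\<forall>a < length \<Delta>. \<forall>b < length \<Delta>. a \<noteq> b \<longrightarrow> \<Delta> ! a \<inter> \<Delta> ! b = {}) \<and>
     \<Union> (set \<Delta>) = {0..<n}"

definition block_update :: "nat \<Rightarrow> nat \<Rightarrow> nat set \<Rightarrow> (nat \<Rightarrow> bool) \<Rightarrow> (nat \<Rightarrow> bool)" where
  "block_update \<alpha> n B x i = (if i \<in> B then eca \<alpha> n x i else x i)"

text \<open>f^(Delta) = f^(Delta_k) o ... o f^(Delta_1): Delta_1 is applied first.\<close>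
definition async_eca :: "nat \<Rightarrow> nat \<Rightarrow> nat set list \<Rightarrow> (nat \<Rightarrow> bool) \<Rightarrow> (nat \<Rightarrow> bool)" where
  "async_eca \<alpha> n \<Delta> x = foldl (\<lambda>y B. block_update \<alpha> n B y) x \<Delta>"

definition blk :: "nat set list \<Rightarrow> nat \<Rightarrow> nat" where
  "blk \<Delta> u = (THE a. a < length \<Delta> \<and> u \<in> \<Delta> ! a)"

datatype label = LPlus | LMinus

definition lab :: "nat set list \<Rightarrow> nat \<times> nat \<Rightarrow> label" where
  "lab \<Delta> e = (if blk \<Delta> (snd e) \<le> blk \<Delta> (fst e) then LPlus else LMinus)"

definition dleft :: "nat \<Rightarrow> nat set list \<Rightarrow> nat \<Rightarrow> nat" where
  "dleft n \<Delta> i = (GREATEST k. \<forall>j::nat. 0 < j \<and> j < k \<longrightarrow>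
      lab \<Delta> (cmod n (int i - int j), cmod n (int i - int j + 1)) = LMinus)"

definition dright :: "nat \<Rightarrow> nat set list \<Rightarrow> nat \<Rightarrow> nat" where
  "dright n \<Delta> i = (GREATEST k. \<forall>j::nat. 0 < j \<and> j < k \<longrightarrow>
      lab \<Delta> (cmod n (int i + int j), cmod n (int i + int j - 1)) = LMinus)"

end

theory Submission
  imports Defs
begin

text \<open>Cell i is updated exactly once, when its block is reached, from its own initial value
  and the current values of its two neighbours. Going left, the neighbour i - 1 has already
  been updated iff its block comes earlier, i.e. iff the edge (i - 1, i) is labelled \<ominus>; its
  value then depends in the same way on i - 2, and so on, while the cell on the other side of
  each cell of this chain is still untouched. The chain stops after dleft n \<Delta> i steps, and
  symmetrically on the right, so the new value of cell i is a fixed function of x,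
  dleft n \<Delta> i and dright n \<Delta> i.\<close>

lemma cmod_less: "0 < n \<Longrightarrow> cmod n k < n"
  unfolding cmod_def by (simp add: nat_less_iff)

lemma cmod_int: "i < n \<Longrightarrow> cmod n (int i) = i"
  unfolding cmod_def by simp

lemma cmod_add_cmod: "0 < n \<Longrightarrow> cmod n (int (cmod n k) + d) = cmod n (k + d)"
  unfolding cmod_def by (simp add: mod_add_left_eq)

definition cell :: "nat \<Rightarrow> nat \<Rightarrow> int \<Rightarrow> int \<Rightarrow> nat" where
  "cell n i s j = cmod n (int i + s * j)"

lemma cell_less: "0 < n \<Longrightarrow> cell n i s j < n"
  unfolding cell_def by (rule cmod_less)

lemma cell_0: "i < n \<Longrightarrow> cell n i s 0 = i"
  unfolding cell_def by (simp add: cmod_int)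

lemma cell_period: "i < n \<Longrightarrow> cell n i s (int n) = i"
  unfolding cell_def cmod_def by simp

lemma cmod_cell_add: "0 < n \<Longrightarrow> cmod n (int (cell n i s j) + s) = cell n i s (j + 1)"
  using cmod_add_cmod[of n _ s] unfolding cell_def by (simp add: algebra_simps)

lemma cmod_cell_diff: "0 < n \<Longrightarrow> cmod n (int (cell n i s j) - s) = cell n i s (j - 1)"
  using cmod_add_cmod[of n _ "- s"] unfolding cell_def by (simp add: algebra_simps)

lemma eca_cong:
  assumes "s \<in> {-1, 1}"
    and "y (cmod n (int c - s)) = z (cmod n (int c - s))" and "y c = z c"
    and "y (cmod n (int c + s)) = z (cmod n (int c + s))"
  shows "eca \<alpha> n y c = eca \<alpha> n z c"
  using assms unfolding eca_def by auto

lemma blk_eqI: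
  assumes "update_schedule n \<Delta>" and "a < length \<Delta>" and "c \<in> \<Delta> ! a"
  shows "blk \<Delta> c = a"
  unfolding blk_def
proof (rule the_equality)
  fix b assume "b < length \<Delta> \<and> c \<in> \<Delta> ! b"
  with assms show "b = a"
    unfolding update_schedule_def by blast
qed (use assms in simp)

lemma blk_in_schedule:
  assumes "update_schedule n \<Delta>" and "c < n"
  shows "blk \<Delta> c < length \<Delta>" and "c \<in> \<Delta> ! blk \<Delta> c"
proof -
  have "c \<in> \<Union> (set \<Delta>)"
    using assms unfolding update_schedule_def by auto
  then obtain a where "a < length \<Delta>" "c \<in> \<Delta> ! a"
    by (auto simp: in_set_conv_nth)
  with blk_eqI[OF assms(1)] show "blk \<Delta> c < length \<Delta>" "c \<in> \<Delta> ! blk \<Delta> c"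
    by auto
qed

lemma lab_eq_LMinus_iff: "lab \<Delta> (u, v) = LMinus \<longleftrightarrow> blk \<Delta> u < blk \<Delta> v"
  by (simp add: lab_def)

lemma async_eca_snoc:
  "async_eca \<alpha> n (\<Delta> @ [B]) x = block_update \<alpha> n B (async_eca \<alpha> n \<Delta> x)"
  by (simp add: async_eca_def)

lemma async_eca_take_cell:
  assumes us: "update_schedule n \<Delta>" and "c < n"
  shows "async_eca \<alpha> n (take t \<Delta>) x c =
    (if blk \<Delta> c < t then eca \<alpha> n (async_eca \<alpha> n (take (blk \<Delta> c) \<Delta>) x) c else x c)"
proof (induction t)
  case 0
  then show ?case by (simp add: async_eca_def)
next
  case (Suc t)
  show ?case
  proof (cases "t < length \<Delta>")
    case True
    then have take_Suc: "take (Suc t) \<Delta> = take t \<Delta> @ [\<Delta> ! t]"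
      by (simp add: take_Suc_conv_app_nth)
    have "c \<in> \<Delta> ! t \<longleftrightarrow> blk \<Delta> c = t"
      using blk_eqI[OF us True] blk_in_schedule[OF us \<open>c < n\<close>] by auto
    with Suc.IH show ?thesis
      by (auto simp: take_Suc async_eca_snoc block_update_def)
  next
    case False
    then show ?thesis
      using Suc.IH blk_in_schedule(1)[OF us \<open>c < n\<close>] by simp
  qed
qed

definition d_dir :: "nat \<Rightarrow> nat set list \<Rightarrow> nat \<Rightarrow> int \<Rightarrow> nat" where
  "d_dir n \<Delta> i s = (GREATEST k. \<forall>j::nat. 0 < j \<and> j < k \<longrightarrow>
      lab \<Delta> (cell n i s (int j), cell n i s (int j - 1)) = LMinus)"

lemma dleft_eq_d_dir: "dleft n \<Delta> i = d_dir n \<Delta> i (-1)"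
  unfolding dleft_def d_dir_def cell_def by (simp add: algebra_simps)

lemma dright_eq_d_dir: "dright n \<Delta> i = d_dir n \<Delta> i 1"
  unfolding dright_def d_dir_def cell_def by (simp add: algebra_simps)

lemma descending_run_bounded:
  assumes "0 < n" and "i < n"
    and run: "\<And>j::nat. 0 < j \<Longrightarrow> j < k \<Longrightarrow> blk \<Delta> (cell n i s (int j)) < blk \<Delta> (cell n i s (int j - 1))"
  shows "k \<le> n"
proof (rule ccontr)
  assume "\<not> k \<le> n"
  have "blk \<Delta> (cell n i s (int j)) + j \<le> blk \<Delta> i" if "j \<le> n" for j
    using that
  proof (induction j)
    case 0
    then show ?case by (simp add: cell_0 \<open>i < n\<close>)
  next
    case (Suc j)
    moreover have "blk \<Delta> (cell n i s (int (Suc j))) < blk \<Delta> (cell n i s (int j))"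
      using run[of "Suc j"] Suc.prems \<open>\<not> k \<le> n\<close> by simp
    ultimately show ?case by simp
  qed
  from this[of n] show False
    using \<open>0 < n\<close> by (simp add: cell_period \<open>i < n\<close>)
qed

lemma d_dir_run:
  assumes "0 < n" and "i < n"
  shows "0 < d_dir n \<Delta> i s"
    and "\<And>j::nat. 0 < j \<Longrightarrow> j < d_dir n \<Delta> i s \<Longrightarrow>
           blk \<Delta> (cell n i s (int j)) < blk \<Delta> (cell n i s (int j - 1))"
    and "blk \<Delta> (cell n i s (int (d_dir n \<Delta> i s) - 1)) \<le> blk \<Delta> (cell n i s (int (d_dir n \<Delta> i s)))"
proof -
  define P where "P k \<longleftrightarrow> (\<forall>j::nat. 0 < j \<and> j < k \<longrightarrow>
      blk \<Delta> (cell n i s (int j)) < blk \<Delta> (cell n i s (int j - 1)))" for k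
  have d_def: "d_dir n \<Delta> i s = Greatest P"
    unfolding d_dir_def P_def lab_eq_LMinus_iff ..
  have bounded: "k \<le> n" if "P k" for k
    using descending_run_bounded[OF assms] that unfolding P_def by blast
  have "P 1"
    unfolding P_def by simp
  then show "0 < d_dir n \<Delta> i s"
    unfolding d_def using Greatest_le_nat[of P 1 n] bounded by simp
  have "P (d_dir n \<Delta> i s)"
    unfolding d_def using GreatestI_nat[of P 1 n] \<open>P 1\<close> bounded by blast
  then show "\<And>j::nat. 0 < j \<Longrightarrow> j < d_dir n \<Delta> i s \<Longrightarrow>
      blk \<Delta> (cell n i s (int j)) < blk \<Delta> (cell n i s (int j - 1))"
    unfolding P_def by blast
  have "\<not> P (Suc (d_dir n \<Delta> i s))"
    unfolding d_def using Greatest_le_nat[of P _ n] bounded by fastforce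
  with \<open>P (d_dir n \<Delta> i s)\<close>
  show "blk \<Delta> (cell n i s (int (d_dir n \<Delta> i s) - 1)) \<le> blk \<Delta> (cell n i s (int (d_dir n \<Delta> i s)))"
    unfolding P_def by (metis less_SucE not_less)
qed

text \<open>The value computed at c when its s-neighbour was updated just before it, that neighbour's
  s-neighbour before that, and so on for m cells; every other cell read is still initial.\<close>
fun cascade :: "nat \<Rightarrow> nat \<Rightarrow> int \<Rightarrow> (nat \<Rightarrow> bool) \<Rightarrow> nat \<Rightarrow> nat \<Rightarrow> bool" where
  "cascade \<alpha> n s x 0 c = x c"
| "cascade \<alpha> n s x (Suc m) c =
     eca \<alpha> n (x(cmod n (int c + s) := cascade \<alpha> n s x m (cmod n (int c + s)))) c"

lemma async_eca_along_run:
  assumes us: "update_schedule n \<Delta>" and "0 < n" and s: "s \<in> {-1, 1}"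
    and "\<And>k. j \<le> k \<Longrightarrow> k < j + int m \<Longrightarrow> blk \<Delta> (cell n i s k) < blk \<Delta> (cell n i s (k - 1))"
    and "blk \<Delta> (cell n i s (j + int m - 1)) \<le> blk \<Delta> (cell n i s (j + int m))"
  shows "async_eca \<alpha> n (take (blk \<Delta> (cell n i s (j - 1))) \<Delta>) x (cell n i s j) =
    cascade \<alpha> n s x m (cell n i s j)"
  using assms(4,5)
proof (induction m arbitrary: j)
  case 0
  then show ?case
    using async_eca_take_cell[OF us cell_less[OF \<open>0 < n\<close>]] by simp
next
  case (Suc m)
  let ?c = "cell n i s j" and ?p = "cell n i s (j - 1)" and ?c' = "cell n i s (j + 1)"
  note at_cell = async_eca_take_cell[OF us cell_less[OF \<open>0 < n\<close>]]
  define y where "y = async_eca \<alpha> n (take (blk \<Delta> ?c) \<Delta>) x"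
  have "blk \<Delta> ?c < blk \<Delta> ?p"
    using Suc.prems(1)[of j] by simp
  then have "async_eca \<alpha> n (take (blk \<Delta> ?p) \<Delta>) x ?c = eca \<alpha> n y ?c"
    unfolding y_def by (simp add: at_cell)
  also have "\<dots> = eca \<alpha> n (x(?c' := cascade \<alpha> n s x m ?c')) ?c"
  proof -
    have "y ?c' = cascade \<alpha> n s x m ?c'"
      using Suc.IH[of "j + 1"] Suc.prems unfolding y_def by (simp add: algebra_simps)
    moreover have "y ?c = x ?c" and "y ?p = x ?p"
      using \<open>blk \<Delta> ?c < blk \<Delta> ?p\<close> unfolding y_def by (simp_all add: at_cell)
    moreover have "cmod n (int ?c + s) = ?c'" and "cmod n (int ?c - s) = ?p"
      using \<open>0 < n\<close> by (simp_all add: cmod_cell_add cmod_cell_diff)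
    ultimately show ?thesis
      by (intro eca_cong[OF s]) auto
  qed
  also have "\<dots> = cascade \<alpha> n s x (Suc m) ?c"
    using \<open>0 < n\<close> by (simp add: cmod_cell_add)
  finally show ?case .
qed

lemma async_eca_at_cell:
  assumes "update_schedule n \<Delta>" and "c < n"
  shows "async_eca \<alpha> n \<Delta> x c = eca \<alpha> n (async_eca \<alpha> n (take (blk \<Delta> c) \<Delta>) x) c"
  using async_eca_take_cell[OF assms, of \<alpha> "length \<Delta>"] blk_in_schedule(1)[OF assms] by simp

lemma async_eca_before_own_block:
  assumes "update_schedule n \<Delta>" and "c < n"
  shows "async_eca \<alpha> n (take (blk \<Delta> c) \<Delta>) x c = x c"
  using async_eca_take_cell[OF assms] by simp

lemma async_eca_before_block_neighbour:
  assumes us: "update_schedule n \<Delta>" and "0 < n" and "i < n" and s: "s \<in> {-1, 1}"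
  shows "async_eca \<alpha> n (take (blk \<Delta> i) \<Delta>) x (cmod n (int i + s)) =
    cascade \<alpha> n s x (d_dir n \<Delta> i s - 1) (cmod n (int i + s))"
proof -
  let ?d = "d_dir n \<Delta> i s"
  have "0 < ?d"
    using d_dir_run(1)[OF \<open>0 < n\<close> \<open>i < n\<close>] .
  have "async_eca \<alpha> n (take (blk \<Delta> (cell n i s (1 - 1))) \<Delta>) x (cell n i s 1) =
    cascade \<alpha> n s x (?d - 1) (cell n i s 1)"
  proof (rule async_eca_along_run[OF us \<open>0 < n\<close> s])
    fix k assume "1 \<le> k" and "k < 1 + int (?d - 1)"
    then show "blk \<Delta> (cell n i s k) < blk \<Delta> (cell n i s (k - 1))"
      using d_dir_run(2)[OF \<open>0 < n\<close> \<open>i < n\<close>, of "nat k"] by simp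
  next
    show "blk \<Delta> (cell n i s (1 + int (?d - 1) - 1)) \<le> blk \<Delta> (cell n i s (1 + int (?d - 1)))"
      using d_dir_run(3)[OF \<open>0 < n\<close> \<open>i < n\<close>] \<open>0 < ?d\<close> by (simp add: of_nat_diff)
  qed
  moreover have "cell n i s 1 = cmod n (int i + s)"
    by (simp add: cell_def)
  ultimately show ?thesis
    by (simp add: cell_0 \<open>i < n\<close>)
qed

theorem mainTheorem10:
  fixes \<alpha> n i :: nat and \<Delta> \<Delta>' :: "nat set list" and x :: "nat \<Rightarrow> bool"
  assumes "\<alpha> \<le> 255" and "n \<ge> 1"
    and "update_schedule n \<Delta>" and "update_schedule n \<Delta>'"
    and "i < n"
    and "dleft n \<Delta> i = dleft n \<Delta>' i"
    and "dright n \<Delta> i = dright n \<Delta>' i"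
  shows "async_eca \<alpha> n \<Delta> x i = async_eca \<alpha> n \<Delta>' x i"
proof -
  have "0 < n"
    using \<open>n \<ge> 1\<close> by simp
  have "d_dir n \<Delta> i s = d_dir n \<Delta>' i s" if "s \<in> {-1, 1}" for s
    using that assms(6,7) by (auto simp: dleft_eq_d_dir dright_eq_d_dir)
  then have "async_eca \<alpha> n (take (blk \<Delta> i) \<Delta>) x (cmod n (int i + s)) =
      async_eca \<alpha> n (take (blk \<Delta>' i) \<Delta>') x (cmod n (int i + s))" if "s \<in> {-1, 1}" for s
    using that async_eca_before_block_neighbour[OF _ \<open>0 < n\<close> \<open>i < n\<close>] assms(3,4) by simp
  from this[of "-1"] this[of 1]
  have "eca \<alpha> n (async_eca \<alpha> n (take (blk \<Delta> i) \<Delta>) x) i =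
      eca \<alpha> n (async_eca \<alpha> n (take (blk \<Delta>' i) \<Delta>') x) i"
    by (intro eca_cong[of 1]) (simp_all add: async_eca_before_own_block assms(3-5))
  then show ?thesis
    by (simp add: async_eca_at_cell assms(3-5))
qed

end
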